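(* Let $G$ be a trigraph containing a fence gadget $F$ (with sides $A$, $B$) attached to a set $S$. Consider any partial contraction sequence from $G$, and the first contraction in it that involves two vertices of $V(F)$ (i.e., merges a part containing a vertex of $V(F)$ with another part containing a vertex of $V(F)$). Unless this contraction involves a pair $(a_i,b_j)$ with $a_i\in A$ and $b_j\in B$, the vertex created by it has red degree at least $5$.
   Context: A trigraph $G$ consists of a vertex set $V(G)$ and two disjoint sets of unordered pairs of distinct vertices: black edges and red edges. Contracting two distinct vertices $u,v$ replaces them by a new vertex $w$ such that, for every other vertex $z$, $wz$ is black if $uz,vz$ are both black, a non-edge if both are non-edges, and red otherwise. In a partial contraction sequence from $G$, each vertex $u$ of a later trigraph corresponds to the set $u(G)$ (its part) of vertices of $G$ merged into it; a contraction of $u,u'$ involves a vertex $v$ of $G$ if $v\in u(G)\cup u'(G)$, and involves a pair $v,v'$ if $v\in u(G),v'\in u'(G)$ or vice versa. A fence gadget is a trigraph $F$ on $A\cup B$, $A=\{a_1,\dots,a_6\}$, $B=\{b_1,\dots,b_6\}$, whose black edges are those of the cycles $a_1a_2a_3a_4a_5a_6a_1$ and $b_1b_2b_3b_4b_5b_6b_1$ together with $b_1a_6$, and whose red edges are $a_ib_i$ for $i\in[6]$ and $a_ib_{i+1}$ for $i\in[5]$. Inside a trigraph $G$, a fence gadget $F$ is attached to a nonempty set $S\subseteq V(G)\setminus V(F)$ if every vertex of $A$ is joined by a black edge to every vertex of $S$ and no vertex of $B$ is adjacent to a vertex of $S$. *)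

theory Defs
  imports Main
begin

text \<open>A trigraph is a triple (V, black edges, red edges); edges are unordered pairs
  represented as two-element sets.\<close>

type_synonym 'v trigraph = "'v set \<times> 'v set set \<times> 'v set set"

definition tverts :: "'v trigraph \<Rightarrow> 'v set" where "tverts T = fst T"
definition tblack :: "'v trigraph \<Rightarrow> 'v set set" where "tblack T = fst (snd T)"
definition tred :: "'v trigraph \<Rightarrow> 'v set set" where "tred T = snd (snd T)"

definition trigraph :: "'v trigraph \<Rightarrow> bool" where
  "trigraph T \<longleftrightarrow> finite (tverts T)
     \<and> tblack T \<union> tred T \<subseteq> {e. \<exists>x y. x \<noteq> y \<and> x \<in> tverts T \<and> y \<in> tverts T \<and> e = {x, y}}
     \<and> tblack T \<inter> tred T = {}"

definition red_degree :: "'v trigraph \<Rightarrow> 'v \<Rightarrow> nat" where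
  "red_degree T w = card {z. {w, z} \<in> tred T}"

text \<open>Trigraphs occurring in a partial contraction sequence from G have as vertices the
  parts (sets of vertices of G). Contracting parts u, v yields the new part u \<union> v.\<close>

definition contract :: "'a set trigraph \<Rightarrow> 'a set \<Rightarrow> 'a set \<Rightarrow> 'a set trigraph" where
  "contract T u v =
    (let V = tverts T; Bk = tblack T; Rd = tred T; w = u \<union> v in
     (insert w (V - {u, v}),
      {e \<in> Bk. u \<notin> e \<and> v \<notin> e}
        \<union> {{w, z} | z. z \<in> V - {u, v} \<and> {u, z} \<in> Bk \<and> {v, z} \<in> Bk},
      {e \<in> Rd. u \<notin> e \<and> v \<notin> e}
        \<union> {{w, z} | z. z \<in> V - {u, v}
              \<and> \<not> ({u, z} \<in> Bk \<and> {v, z} \<in> Bk)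
              \<and> \<not> ({u, z} \<notin> Bk \<union> Rd \<and> {v, z} \<notin> Bk \<union> Rd)}))"

definition lift :: "'a trigraph \<Rightarrow> 'a set trigraph" where
  "lift G = ((\<lambda>x. {x}) ` tverts G, (\<lambda>e. (\<lambda>x. {x}) ` e) ` tblack G,
             (\<lambda>e. (\<lambda>x. {x}) ` e) ` tred G)"

text \<open>A partial contraction sequence is given by the list of contracted pairs of parts;
  seq_state G cs k is the trigraph after the first k contractions.\<close>

definition seq_state :: "'a trigraph \<Rightarrow> ('a set \<times> 'a set) list \<Rightarrow> nat \<Rightarrow> 'a set trigraph" where
  "seq_state G cs k = foldl (\<lambda>T p. contract T (fst p) (snd p)) (lift G) (take k cs)"

definition partial_contraction_sequence :: "'a trigraph \<Rightarrow> ('a set \<times> 'a set) list \<Rightarrow> bool" where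
  "partial_contraction_sequence G cs \<longleftrightarrow>
     (\<forall>k < length cs. fst (cs ! k) \<noteq> snd (cs ! k)
        \<and> fst (cs ! k) \<in> tverts (seq_state G cs k)
        \<and> snd (cs ! k) \<in> tverts (seq_state G cs k))"

text \<open>Fence gadget with A = a ` {1..6}, B = b ` {1..6}.\<close>

definition fence_verts :: "(nat \<Rightarrow> 'a) \<Rightarrow> (nat \<Rightarrow> 'a) \<Rightarrow> 'a set" where
  "fence_verts a b = a ` {1..6} \<union> b ` {1..6}"

definition fence_black :: "(nat \<Rightarrow> 'a) \<Rightarrow> (nat \<Rightarrow> 'a) \<Rightarrow> 'a set set" where
  "fence_black a b =
     {{a i, a (i mod 6 + 1)} | i. i \<in> {1..6}}
     \<union> {{b i, b (i mod 6 + 1)} | i. i \<in> {1..6}}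
     \<union> {{b 1, a 6}}"

definition fence_red :: "(nat \<Rightarrow> 'a) \<Rightarrow> (nat \<Rightarrow> 'a) \<Rightarrow> 'a set set" where
  "fence_red a b =
     {{a i, b i} | i. i \<in> {1..6}} \<union> {{a i, b (i + 1)} | i. i \<in> {1..5}}"

definition contains_fence :: "'a trigraph \<Rightarrow> (nat \<Rightarrow> 'a) \<Rightarrow> (nat \<Rightarrow> 'a) \<Rightarrow> bool" where
  "contains_fence G a b \<longleftrightarrow>
     inj_on a {1..6} \<and> inj_on b {1..6} \<and> a ` {1..6} \<inter> b ` {1..6} = {}
     \<and> fence_verts a b \<subseteq> tverts G
     \<and> (\<forall>x \<in> fence_verts a b. \<forall>y \<in> fence_verts a b.
          ({x, y} \<in> tblack G \<longleftrightarrow> {x, y} \<in> fence_black a b)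
          \<and> ({x, y} \<in> tred G \<longleftrightarrow> {x, y} \<in> fence_red a b))"

definition fence_attached :: "'a trigraph \<Rightarrow> (nat \<Rightarrow> 'a) \<Rightarrow> (nat \<Rightarrow> 'a) \<Rightarrow> 'a set \<Rightarrow> bool" where
  "fence_attached G a b S \<longleftrightarrow>
     S \<noteq> {} \<and> S \<subseteq> tverts G - fence_verts a b
     \<and> (\<forall>i \<in> {1..6}. \<forall>s \<in> S. {a i, s} \<in> tblack G)
     \<and> (\<forall>j \<in> {1..6}. \<forall>s \<in> S. {b j, s} \<notin> tblack G \<and> {b j, s} \<notin> tred G)"

end

theory Submission
  imports Defs "HOL-Library.Disjoint_Sets"
begin

text \<open>
  Every trigraph of a contraction sequence from \<open>G\<close> is the quotient of \<open>G\<close> by its current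
  partition of \<open>V(G)\<close>: two parts are joined black if all pairs between them are black,
  non-adjacent if no pair between them is an edge, and red otherwise. Before the first contraction
  inside the fence every part contains at most one fence vertex. If that contraction merges parts
  containing fence vertices \<open>x\<close> and \<open>y\<close> on the same side, then the part of any other fence
  vertex \<open>z\<close> becomes a red neighbour of the merged part as soon as \<open>z\<close> is non-black to one of
  \<open>x, y\<close> and adjacent to one of \<open>x, y\<close>; a finite check over the fence shows that at least
  five such \<open>z\<close> exist for every such pair \<open>x, y\<close>.
\<close>

section \<open>Quotient trigraphs\<close>

definition all_black :: "'a trigraph \<Rightarrow> 'a set \<Rightarrow> 'a set \<Rightarrow> bool" where
  "all_black G p q \<longleftrightarrow> (\<forall>x\<in>p. \<forall>y\<in>q. {x, y} \<in> tblack G)"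

definition all_nonadjacent :: "'a trigraph \<Rightarrow> 'a set \<Rightarrow> 'a set \<Rightarrow> bool" where
  "all_nonadjacent G p q \<longleftrightarrow> (\<forall>x\<in>p. \<forall>y\<in>q. {x, y} \<notin> tblack G \<union> tred G)"

definition mixed :: "'a trigraph \<Rightarrow> 'a set \<Rightarrow> 'a set \<Rightarrow> bool" where
  "mixed G p q \<longleftrightarrow> \<not> all_black G p q \<and> \<not> all_nonadjacent G p q"

definition block_edges :: "'b set \<Rightarrow> ('b \<Rightarrow> 'b \<Rightarrow> bool) \<Rightarrow> 'b set set" where
  "block_edges P R = {{p, q} | p q. p \<in> P \<and> q \<in> P \<and> p \<noteq> q \<and> R p q}"

definition quotient_trigraph :: "'a trigraph \<Rightarrow> 'a set set \<Rightarrow> 'a set trigraph" where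
  "quotient_trigraph G P = (P, block_edges P (all_black G), block_edges P (mixed G))"

lemma quotient_trigraph_simps:
  "tverts (quotient_trigraph G P) = P"
  "tblack (quotient_trigraph G P) = block_edges P (all_black G)"
  "tred (quotient_trigraph G P) = block_edges P (mixed G)"
  by (simp_all add: quotient_trigraph_def tverts_def tblack_def tred_def)

lemma ball_doubleton_commute:
  "(\<forall>x\<in>p. \<forall>y\<in>q. P {x, y}) \<longleftrightarrow> (\<forall>x\<in>q. \<forall>y\<in>p. P {x, y})"
  by (metis insert_commute)

lemma symp_all_black: "symp (all_black G)"
  unfolding all_black_def by (rule sympI) (subst ball_doubleton_commute)

lemma symp_all_nonadjacent: "symp (all_nonadjacent G)"
  unfolding all_nonadjacent_def by (rule sympI) (subst ball_doubleton_commute)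

lemma symp_mixed: "symp (mixed G)"
  unfolding mixed_def by (rule sympI) (metis sympD symp_all_black symp_all_nonadjacent)

lemma all_black_Un_left: "all_black G (p \<union> p') q \<longleftrightarrow> all_black G p q \<and> all_black G p' q"
  unfolding all_black_def by blast

lemma all_nonadjacent_Un_left:
  "all_nonadjacent G (p \<union> p') q \<longleftrightarrow> all_nonadjacent G p q \<and> all_nonadjacent G p' q"
  unfolding all_nonadjacent_def by blast

lemma not_all_black_and_all_nonadjacent:
  "p \<noteq> {} \<Longrightarrow> q \<noteq> {} \<Longrightarrow> \<not> (all_black G p q \<and> all_nonadjacent G p q)"
  unfolding all_black_def all_nonadjacent_def by blast

lemma doubleton_in_block_edges_iff:
  "p \<in> P \<Longrightarrow> q \<in> P \<Longrightarrow> symp R \<Longrightarrow> {p, q} \<in> block_edges P R \<longleftrightarrow> p \<noteq> q \<and> R p q"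
  unfolding block_edges_def symp_def by (auto simp: doubleton_eq_iff)

lemma block_edges_avoiding:
  "{e \<in> block_edges P R. u \<notin> e \<and> v \<notin> e} = block_edges (P - {u, v}) R"
  unfolding block_edges_def by auto

lemma block_edges_insert:
  assumes "symp R" "w \<notin> Q"
  shows "block_edges (insert w Q) R = block_edges Q R \<union> {{w, z} | z. z \<in> Q \<and> R w z}"
  using assms unfolding block_edges_def symp_def by auto

lemma block_edges_subset: "e \<in> block_edges P R \<Longrightarrow> e \<subseteq> P"
  unfolding block_edges_def by blast

lemma block_edges_singletons:
  "block_edges ((\<lambda>x. {x}) ` V) R
     = (`) (\<lambda>x. {x}) ` {{x, y} | x y. x \<in> V \<and> y \<in> V \<and> x \<noteq> y \<and> R {x} {y}}"
    (is "?L = ?R")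
proof (intro equalityI subsetI)
  fix e assume "e \<in> ?L"
  then obtain x y where "x \<in> V" "y \<in> V" "x \<noteq> y" "R {x} {y}" "e = {{x}, {y}}"
    unfolding block_edges_def by auto
  then show "e \<in> ?R"
    by (intro image_eqI[of _ _ "{x, y}"]) auto
next
  fix e assume "e \<in> ?R"
  then obtain x y where "x \<in> V" "y \<in> V" "x \<noteq> y" "R {x} {y}" "e = {{x}, {y}}"
    by auto
  then show "e \<in> ?L"
    unfolding block_edges_def by auto
qed

lemma trigraph_edges_eq:
  assumes "trigraph G" "E \<subseteq> tblack G \<union> tred G"
  shows "E = {{x, y} | x y. x \<in> tverts G \<and> y \<in> tverts G \<and> x \<noteq> y \<and> {x, y} \<in> E}"
  using assms unfolding trigraph_def by blast

lemma lift_eq_quotient_trigraph: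
  assumes "trigraph G"
  shows "lift G = quotient_trigraph G ((\<lambda>x. {x}) ` tverts G)"
proof -
  have disj: "tblack G \<inter> tred G = {}"
    using assms unfolding trigraph_def by blast
  have black: "all_black G {x} {y} \<longleftrightarrow> {x, y} \<in> tblack G" for x y
    by (simp add: all_black_def)
  have red: "mixed G {x} {y} \<longleftrightarrow> {x, y} \<in> tred G" for x y
    using disj by (auto simp: mixed_def all_black_def all_nonadjacent_def)
  have edges:
    "tblack G = {{x, y} | x y. x \<in> tverts G \<and> y \<in> tverts G \<and> x \<noteq> y \<and> {x, y} \<in> tblack G}"
    "tred G = {{x, y} | x y. x \<in> tverts G \<and> y \<in> tverts G \<and> x \<noteq> y \<and> {x, y} \<in> tred G}"
    by (rule trigraph_edges_eq[OF assms]; blast)+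
  have "lift G = ((\<lambda>x. {x}) ` tverts G, (`) (\<lambda>x. {x}) ` tblack G, (`) (\<lambda>x. {x}) ` tred G)"
    by (simp add: lift_def)
  also have "\<dots> = quotient_trigraph G ((\<lambda>x. {x}) ` tverts G)"
    unfolding quotient_trigraph_def block_edges_singletons black red
    by (metis edges)
  finally show ?thesis .
qed

lemma partition_on_merge:
  assumes "partition_on A P" "u \<in> P" "v \<in> P"
  shows "partition_on A (insert (u \<union> v) (P - {u, v}))"
proof (rule partition_onI)
  show "\<Union>(insert (u \<union> v) (P - {u, v})) = A"
    using partition_onD1[OF assms(1)] assms(2,3) by blast
  show "{} \<notin> insert (u \<union> v) (P - {u, v})"
    using partition_onD3[OF assms(1)] assms(2) by auto
  have blocks: "disjnt p q" if "p \<in> P" "q \<in> P" "p \<noteq> q" for p q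
    using partition_onD2[OF assms(1)] that by (simp add: disjnt_def disjointD)
  have merged: "disjnt (u \<union> v) q" if "q \<in> P - {u, v}" for q
    using blocks[OF assms(2), of q] blocks[OF assms(3), of q] that by (auto simp: disjnt_Un1)
  show "disjnt p q" if "p \<in> insert (u \<union> v) (P - {u, v})" "q \<in> insert (u \<union> v) (P - {u, v})"
    "p \<noteq> q" for p q
    using that blocks merged disjnt_sym by (metis DiffD1 insertE)
qed

lemma doubletons_cong:
  "(\<And>z. z \<in> Q \<Longrightarrow> X z \<longleftrightarrow> Y z) \<Longrightarrow> {{w, z} | z. z \<in> Q \<and> X z} = {{w, z} | z. z \<in> Q \<and> Y z}"
  by blast

lemma partition_on_Un_notin:
  assumes "partition_on A P" "u \<in> P"
  shows "u \<union> v \<notin> P - {u, v}"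
proof
  assume "u \<union> v \<in> P - {u, v}"
  then have "u \<inter> (u \<union> v) = {}"
    using disjointD[OF partition_onD2[OF assms(1)] assms(2)] by blast
  then show False
    using partition_onD3[OF assms(1)] assms(2) by auto
qed

lemma doubleton_notin_quotient_edges_iff:
  assumes "partition_on A P" "p \<in> P" "q \<in> P" "p \<noteq> q"
  shows "{p, q} \<notin> block_edges P (all_black G) \<union> block_edges P (mixed G) \<longleftrightarrow> all_nonadjacent G p q"
proof -
  have "p \<noteq> {}" "q \<noteq> {}"
    using partition_onD3[OF assms(1)] assms(2,3) by auto
  then show ?thesis
    using doubleton_in_block_edges_iff[OF assms(2,3) symp_all_black]
      doubleton_in_block_edges_iff[OF assms(2,3) symp_mixed]
      not_all_black_and_all_nonadjacent[of p q G] assms(4)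
    unfolding mixed_def by auto
qed

lemma contract_quotient_trigraph:
  assumes P: "partition_on A P" and uv: "u \<in> P" "v \<in> P" "u \<noteq> v"
  shows "contract (quotient_trigraph G P) u v = quotient_trigraph G (insert (u \<union> v) (P - {u, v}))"
proof -
  let ?Q = "P - {u, v}"
  let ?B = "block_edges P (all_black G)" and ?R = "block_edges P (mixed G)"
  have black_iff: "{p, z} \<in> ?B \<longleftrightarrow> all_black G p z" if "p \<in> P" "z \<in> P" "p \<noteq> z" for p z
    using doubleton_in_block_edges_iff[OF that(1,2) symp_all_black] that(3) by simp
  note nonadjacent_iff = doubleton_notin_quotient_edges_iff[OF P, of _ _ G]
  have black_new: "{{u \<union> v, z} | z. z \<in> ?Q \<and> {u, z} \<in> ?B \<and> {v, z} \<in> ?B}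
      = {{u \<union> v, z} | z. z \<in> ?Q \<and> all_black G (u \<union> v) z}"
  proof (rule doubletons_cong)
    fix z assume "z \<in> ?Q"
    then show "{u, z} \<in> ?B \<and> {v, z} \<in> ?B \<longleftrightarrow> all_black G (u \<union> v) z"
      using black_iff[OF uv(1)] black_iff[OF uv(2)] by (auto simp: all_black_Un_left)
  qed
  have red_new: "{{u \<union> v, z} | z. z \<in> ?Q \<and> \<not> ({u, z} \<in> ?B \<and> {v, z} \<in> ?B)
        \<and> \<not> ({u, z} \<notin> ?B \<union> ?R \<and> {v, z} \<notin> ?B \<union> ?R)}
      = {{u \<union> v, z} | z. z \<in> ?Q \<and> mixed G (u \<union> v) z}"
  proof (rule doubletons_cong)
    fix z assume "z \<in> ?Q"
    then show "\<not> ({u, z} \<in> ?B \<and> {v, z} \<in> ?B) \<and> \<not> ({u, z} \<notin> ?B \<union> ?R \<and> {v, z} \<notin> ?B \<union> ?R)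
        \<longleftrightarrow> mixed G (u \<union> v) z"
      using black_iff[OF uv(1)] black_iff[OF uv(2)] nonadjacent_iff[OF uv(1)] nonadjacent_iff[OF uv(2)]
      by (auto simp: mixed_def all_black_Un_left all_nonadjacent_Un_left)
  qed
  have merged_notin: "u \<union> v \<notin> ?Q"
    using partition_on_Un_notin[OF P uv(1)] .
  show ?thesis
    unfolding contract_def Let_def quotient_trigraph_simps
    unfolding quotient_trigraph_def block_edges_avoiding black_new red_new
      block_edges_insert[OF symp_all_black merged_notin] block_edges_insert[OF symp_mixed merged_notin]
    ..
qed

section \<open>Contraction sequences\<close>

lemma seq_state_0: "seq_state G cs 0 = lift G"
  by (simp add: seq_state_def)

lemma seq_state_Suc:
  "j < length cs \<Longrightarrow> seq_state G cs (Suc j) = contract (seq_state G cs j) (fst (cs ! j)) (snd (cs ! j))"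
  by (simp add: seq_state_def take_Suc_conv_app_nth)

lemma tverts_contract: "tverts (contract T u v) = insert (u \<union> v) (tverts T - {u, v})"
  by (simp add: contract_def Let_def tverts_def)

lemma partial_contraction_sequenceD:
  "partial_contraction_sequence G cs \<Longrightarrow> j < length cs \<Longrightarrow> cs ! j = (u, v) \<Longrightarrow>
     u \<in> tverts (seq_state G cs j) \<and> v \<in> tverts (seq_state G cs j) \<and> u \<noteq> v"
  unfolding partial_contraction_sequence_def by (metis fst_conv snd_conv)

lemma seq_state_eq_quotient_trigraph:
  assumes G: "trigraph G" and cs: "partial_contraction_sequence G cs"
  shows "j \<le> length cs \<Longrightarrow> partition_on (tverts G) (tverts (seq_state G cs j))
           \<and> seq_state G cs j = quotient_trigraph G (tverts (seq_state G cs j))"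
proof (induction j)
  case 0
  show ?case
    using lift_eq_quotient_trigraph[OF G]
    by (simp add: seq_state_0 quotient_trigraph_simps partition_on_singletons)
next
  case (Suc j)
  obtain u v where uv: "cs ! j = (u, v)"
    by fastforce
  let ?P = "tverts (seq_state G cs j)"
  have j: "j < length cs"
    using Suc.prems by simp
  have P: "partition_on (tverts G) ?P" and T: "seq_state G cs j = quotient_trigraph G ?P"
    using Suc by auto
  have "seq_state G cs (Suc j) = contract (quotient_trigraph G ?P) u v"
    using seq_state_Suc[OF j] uv by (simp flip: T)
  also have "\<dots> = quotient_trigraph G (insert (u \<union> v) (?P - {u, v}))"
    using contract_quotient_trigraph[OF P] partial_contraction_sequenceD[OF cs j uv] by blast
  finally show ?case
    using partition_on_merge[OF P] partial_contraction_sequenceD[OF cs j uv]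
    by (simp add: quotient_trigraph_simps)
qed

lemma red_degree_quotient_trigraph:
  assumes "w \<in> P"
  shows "red_degree (quotient_trigraph G P) w = card {z \<in> P - {w}. mixed G w z}"
proof -
  have "{w, z} \<in> block_edges P (mixed G) \<longleftrightarrow> z \<in> P - {w} \<and> mixed G w z" for z
  proof
    assume edge: "{w, z} \<in> block_edges P (mixed G)"
    then have "z \<in> P"
      using block_edges_subset by blast
    then show "z \<in> P - {w} \<and> mixed G w z"
      using edge doubleton_in_block_edges_iff[OF assms _ symp_mixed] by blast
  next
    assume "z \<in> P - {w} \<and> mixed G w z"
    then show "{w, z} \<in> block_edges P (mixed G)"
      using doubleton_in_block_edges_iff[OF assms _ symp_mixed] by blast
  qed
  then show ?thesis
    unfolding red_degree_def quotient_trigraph_simps by simp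
qed

lemma card_le_red_degree_quotient_trigraph:
  assumes P: "partition_on A P" "finite A" and w: "w \<in> P"
    and X: "X \<subseteq> A - w" and once: "\<forall>p\<in>P. \<forall>x\<in>p \<inter> X. \<forall>y\<in>p \<inter> X. x = y"
    and mixed: "\<And>x. x \<in> X \<Longrightarrow> (\<exists>s\<in>w. {s, x} \<notin> tblack G) \<and> (\<exists>t\<in>w. {t, x} \<in> tblack G \<union> tred G)"
  shows "card X \<le> red_degree (quotient_trigraph G P) w"
proof -
  have "\<forall>x\<in>A. \<exists>p. p \<in> P \<and> x \<in> p"
    using partition_onD1[OF P(1)] by blast
  then obtain block where block: "\<forall>x\<in>A. block x \<in> P \<and> x \<in> block x"
    by (auto dest!: bchoice)
  have "inj_on block X"
  proof (rule inj_onI)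
    fix x y assume "x \<in> X" "y \<in> X" "block x = block y"
    then have "block x \<in> P" "x \<in> block x \<inter> X" "y \<in> block x \<inter> X"
      using block X by auto
    then show "x = y"
      using once by blast
  qed
  moreover have "block ` X \<subseteq> {z \<in> P - {w}. mixed G w z}"
  proof (rule image_subsetI)
    fix x assume x: "x \<in> X"
    then have "x \<in> A" "x \<notin> w"
      using X by auto
    then have "block x \<in> P - {w}" "x \<in> block x"
      using block by auto
    moreover have "mixed G w (block x)"
      using mixed[OF x] \<open>x \<in> block x\<close> unfolding mixed_def all_black_def all_nonadjacent_def by blast
    ultimately show "block x \<in> {z \<in> P - {w}. mixed G w z}"
      by blast
  qed
  moreover have "finite P"
    using finite_elements[OF P(2,1)] .
  ultimately show ?thesis
    unfolding red_degree_quotient_trigraph[OF w] by (simp add: card_inj_on_le)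
qed

lemma seq_state_blocks_meet_at_most_once:
  assumes cs: "partial_contraction_sequence G cs"
  shows "k \<le> length cs \<Longrightarrow> \<forall>j<k. fst (cs ! j) \<inter> F = {} \<or> snd (cs ! j) \<inter> F = {} \<Longrightarrow>
           \<forall>p\<in>tverts (seq_state G cs k). \<forall>x\<in>p \<inter> F. \<forall>y\<in>p \<inter> F. x = y"
proof (induction k)
  case 0
  show ?case
    by (auto simp: seq_state_0 lift_def tverts_def)
next
  case (Suc k)
  obtain u v where uv: "cs ! k = (u, v)"
    by fastforce
  have k: "k < length cs"
    using Suc.prems by simp
  have IH: "\<forall>p\<in>tverts (seq_state G cs k). \<forall>x\<in>p \<inter> F. \<forall>y\<in>p \<inter> F. x = y"
    using Suc by simp
  have "u \<inter> F = {} \<or> v \<inter> F = {}"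
    using Suc.prems(2) uv by (metis fst_conv snd_conv lessI)
  then have "(u \<union> v) \<inter> F = u \<inter> F \<or> (u \<union> v) \<inter> F = v \<inter> F"
    by blast
  then show ?case
    using IH partial_contraction_sequenceD[OF cs k uv]
    unfolding seq_state_Suc[OF k] uv tverts_contract by (metis Diff_iff fst_conv insert_iff snd_conv)
qed

section \<open>The fence gadget\<close>

text \<open>Indices \<open>1..6\<close> stand for \<open>a\<^sub>1, \<dots>, a\<^sub>6\<close> and indices \<open>7..12\<close> for \<open>b\<^sub>1, \<dots>, b\<^sub>6\<close>.\<close>

definition fence_vertex :: "(nat \<Rightarrow> 'a) \<Rightarrow> (nat \<Rightarrow> 'a) \<Rightarrow> nat \<Rightarrow> 'a" where
  "fence_vertex a b i = (if i \<le> 6 then a i else b (i - 6))"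

definition fence_black_pairs :: "(nat \<times> nat) list" where
  "fence_black_pairs =
     [(1,2), (2,3), (3,4), (4,5), (5,6), (6,1), (7,8), (8,9), (9,10), (10,11), (11,12), (12,7), (7,6)]"

definition fence_red_pairs :: "(nat \<times> nat) list" where
  "fence_red_pairs =
     [(1,7), (2,8), (3,9), (4,10), (5,11), (6,12), (1,8), (2,9), (3,10), (4,11), (5,12)]"

definition fence_black_index :: "nat \<Rightarrow> nat \<Rightarrow> bool" where
  "fence_black_index i j \<longleftrightarrow> (i, j) \<in> set fence_black_pairs \<or> (j, i) \<in> set fence_black_pairs"

definition fence_red_index :: "nat \<Rightarrow> nat \<Rightarrow> bool" where
  "fence_red_index i j \<longleftrightarrow> (i, j) \<in> set fence_red_pairs \<or> (j, i) \<in> set fence_red_pairs"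

definition fence_mixed_index :: "nat \<Rightarrow> nat \<Rightarrow> nat \<Rightarrow> bool" where
  "fence_mixed_index m n f \<longleftrightarrow> \<not> (fence_black_index m f \<and> fence_black_index n f)
     \<and> (fence_black_index m f \<or> fence_red_index m f \<or> fence_black_index n f \<or> fence_red_index n f)"

lemma fence_mixed_index_count:
  "list_all (\<lambda>m. list_all (\<lambda>n. m = n \<or> (m \<le> 6) \<noteq> (n \<le> 6)
     \<or> 5 \<le> length (filter (\<lambda>f. f \<noteq> m \<and> f \<noteq> n \<and> fence_mixed_index m n f) [1..<13]))
     [1..<13]) [1..<13]"
  by code_simp

lemma card_fence_mixed_index:
  assumes "m \<in> {1..12}" "n \<in> {1..12}" "m \<noteq> n" "m \<le> 6 \<longleftrightarrow> n \<le> 6"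
  shows "5 \<le> card {f \<in> {1..12} - {m, n}. fence_mixed_index m n f}"
proof -
  let ?mixed = "\<lambda>f. f \<noteq> m \<and> f \<noteq> n \<and> fence_mixed_index m n f"
  have "5 \<le> length (filter ?mixed [1..<13])"
    using fence_mixed_index_count assms unfolding list_all_iff by fastforce
  also have "\<dots> = card (set (filter ?mixed [1..<13]))"
    by (rule distinct_card[symmetric]) simp
  also have "set (filter ?mixed [1..<13]) = {f \<in> {1..12} - {m, n}. fence_mixed_index m n f}"
    by auto
  finally show ?thesis .
qed

lemma fence_verts_eq_image: "fence_verts a b = fence_vertex a b ` {1..12}"
proof
  show "fence_verts a b \<subseteq> fence_vertex a b ` {1..12}"
  proof
    fix x assume "x \<in> fence_verts a b"
    then consider i where "i \<in> {1..6}" "x = a i" | i where "i \<in> {1..6}" "x = b i"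
      unfolding fence_verts_def by blast
    then show "x \<in> fence_vertex a b ` {1..12}"
    proof cases
      case (1 i)
      then show ?thesis
        by (intro rev_image_eqI[of i]) (auto simp: fence_vertex_def)
    next
      case (2 i)
      then show ?thesis
        by (intro rev_image_eqI[of "i + 6"]) (auto simp: fence_vertex_def)
    qed
  qed
  have "fence_vertex a b i \<in> fence_verts a b" if "i \<in> {1..12}" for i
  proof (cases "i \<le> 6")
    case True
    then show ?thesis
      using that by (simp add: fence_vertex_def fence_verts_def)
  next
    case False
    then have "i - 6 \<in> {1..6}"
      using that by auto
    then show ?thesis
      using False by (simp add: fence_vertex_def fence_verts_def)
  qed
  then show "fence_vertex a b ` {1..12} \<subseteq> fence_verts a b"
    by blast
qed

lemma fence_vertex_in_fence_verts: "i \<in> {1..12} \<Longrightarrow> fence_vertex a b i \<in> fence_verts a b"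
  unfolding fence_verts_eq_image by blast

lemma inj_on_fence_vertex:
  assumes "contains_fence G a b"
  shows "inj_on (fence_vertex a b) {1..12}"
proof (rule inj_onI)
  fix m n :: nat assume m: "m \<in> {1..12}" and n: "n \<in> {1..12}"
    and eq: "fence_vertex a b m = fence_vertex a b n"
  have a: "inj_on a {1..6}" and b: "inj_on b {1..6}" and ab: "a ` {1..6} \<inter> b ` {1..6} = {}"
    using assms unfolding contains_fence_def by blast+
  show "m = n"
  proof (cases "m \<le> 6"; cases "n \<le> 6")
    assume "m \<le> 6" "n \<le> 6"
    then show ?thesis
      using eq m n inj_onD[OF a] by (simp add: fence_vertex_def)
  next
    assume "m \<le> 6" "\<not> n \<le> 6"
    then show ?thesis
      using eq m n ab by (force simp: fence_vertex_def)
  next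
    assume "\<not> m \<le> 6" "n \<le> 6"
    then show ?thesis
      using eq m n ab by (force simp: fence_vertex_def)
  next
    assume "\<not> m \<le> 6" "\<not> n \<le> 6"
    moreover have "m - 6 \<in> {1..6}" "n - 6 \<in> {1..6}"
      using m n calculation by auto
    ultimately have "m - 6 = n - 6"
      using eq inj_onD[OF b] by (simp add: fence_vertex_def)
    then show ?thesis
      using \<open>\<not> m \<le> 6\<close> \<open>\<not> n \<le> 6\<close> by simp
  qed
qed

lemma setcompr_upto_6: "{f i | i. i \<in> {1..6::nat}} = {f 1, f 2, f 3, f 4, f 5, f 6}"
proof -
  have "{1..6::nat} = {1, 2, 3, 4, 5, 6}"
    by auto
  then show ?thesis
    by (simp only:) blast
qed

lemma setcompr_upto_5: "{f i | i. i \<in> {1..5::nat}} = {f 1, f 2, f 3, f 4, f 5}"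
proof -
  have "{1..5::nat} = {1, 2, 3, 4, 5}"
    by auto
  then show ?thesis
    by (simp only:) blast
qed

lemma fence_black_eq_image:
  "fence_black a b = (\<lambda>(i, j). {fence_vertex a b i, fence_vertex a b j}) ` set fence_black_pairs"
  unfolding fence_black_def fence_black_pairs_def setcompr_upto_6[where f = "\<lambda>i. {a i, a (i mod 6 + 1)}"]
    setcompr_upto_6[where f = "\<lambda>i. {b i, b (i mod 6 + 1)}"]
  by (simp add: fence_vertex_def numeral_2_eq_2[symmetric]) (simp add: insert_commute)

lemma fence_red_eq_image:
  "fence_red a b = (\<lambda>(i, j). {fence_vertex a b i, fence_vertex a b j}) ` set fence_red_pairs"
  unfolding fence_red_def fence_red_pairs_def setcompr_upto_6[where f = "\<lambda>i. {a i, b i}"]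
    setcompr_upto_5[where f = "\<lambda>i. {a i, b (i + 1)}"]
  by (simp add: fence_vertex_def numeral_2_eq_2[symmetric]) (simp add: insert_commute)

lemma doubleton_in_image_pairs_iff:
  assumes "inj_on f A" "set L \<subseteq> A \<times> A" "i \<in> A" "j \<in> A"
  shows "{f i, f j} \<in> (\<lambda>(k, l). {f k, f l}) ` set L \<longleftrightarrow> (i, j) \<in> set L \<or> (j, i) \<in> set L"
proof
  assume "{f i, f j} \<in> (\<lambda>(k, l). {f k, f l}) ` set L"
  then obtain k l where kl: "(k, l) \<in> set L" "{f i, f j} = {f k, f l}"
    by auto
  moreover have "k \<in> A" "l \<in> A"
    using kl(1) assms(2) by auto
  ultimately have "(i = k \<and> j = l) \<or> (i = l \<and> j = k)"
    using assms(3,4) inj_on_eq_iff[OF assms(1)] by (auto simp: doubleton_eq_iff)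
  then show "(i, j) \<in> set L \<or> (j, i) \<in> set L"
    using kl(1) by auto
next
  assume "(i, j) \<in> set L \<or> (j, i) \<in> set L"
  then show "{f i, f j} \<in> (\<lambda>(k, l). {f k, f l}) ` set L"
    by (force simp: insert_commute)
qed

lemma contains_fence_edges_iff:
  assumes "contains_fence G a b" "i \<in> {1..12}" "j \<in> {1..12}"
  shows "{fence_vertex a b i, fence_vertex a b j} \<in> tblack G \<longleftrightarrow> fence_black_index i j"
    and "{fence_vertex a b i, fence_vertex a b j} \<in> tred G \<longleftrightarrow> fence_red_index i j"
proof -
  have in_fence: "fence_vertex a b i \<in> fence_verts a b" "fence_vertex a b j \<in> fence_verts a b"
    using fence_vertex_in_fence_verts assms(2,3) by blast+
  have "set fence_black_pairs \<subseteq> {1..12} \<times> {1..12}" "set fence_red_pairs \<subseteq> {1..12} \<times> {1..12}"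
    by (simp_all add: fence_black_pairs_def fence_red_pairs_def)
  then show "{fence_vertex a b i, fence_vertex a b j} \<in> tblack G \<longleftrightarrow> fence_black_index i j"
    and "{fence_vertex a b i, fence_vertex a b j} \<in> tred G \<longleftrightarrow> fence_red_index i j"
    using assms in_fence inj_on_fence_vertex[OF assms(1)]
    unfolding contains_fence_def fence_black_index_def fence_red_index_def
      fence_black_eq_image fence_red_eq_image
    by (simp_all add: doubleton_in_image_pairs_iff)
qed

lemma contains_fence_mixed_index:
  assumes "contains_fence G a b" "m \<in> {1..12}" "n \<in> {1..12}" "f \<in> {1..12}"
    and "fence_mixed_index m n f"
  shows "{fence_vertex a b m, fence_vertex a b f} \<notin> tblack G \<or> {fence_vertex a b n, fence_vertex a b f} \<notin> tblack G"
    and "{fence_vertex a b m, fence_vertex a b f} \<in> tblack G \<union> tred G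
      \<or> {fence_vertex a b n, fence_vertex a b f} \<in> tblack G \<union> tred G"
  using assms(5) contains_fence_edges_iff[OF assms(1)] assms(2-4)
  unfolding fence_mixed_index_def by blast+

lemma fence_vertex_block_unique:
  assumes "contains_fence G a b" "\<forall>x\<in>p \<inter> fence_verts a b. \<forall>y\<in>p \<inter> fence_verts a b. x = y"
    and "f \<in> {1..12}" "g \<in> {1..12}" "fence_vertex a b f \<in> p" "fence_vertex a b g \<in> p"
  shows "f = g"
proof -
  have "fence_vertex a b f = fence_vertex a b g"
    using assms(2,5,6) fence_vertex_in_fence_verts[OF assms(3)] fence_vertex_in_fence_verts[OF assms(4)]
    by blast
  then show ?thesis
    using inj_onD[OF inj_on_fence_vertex[OF assms(1)] _ assms(3,4)] by blast
qed

lemma red_degree_merging_fence_vertices: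
  assumes G: "trigraph G" "contains_fence G a b" and P: "partition_on (tverts G) P"
    and once: "\<forall>p\<in>P. \<forall>x\<in>p \<inter> fence_verts a b. \<forall>y\<in>p \<inter> fence_verts a b. x = y"
    and uv: "u \<in> P" "v \<in> P" "u \<noteq> v"
    and mn: "m \<in> {1..12}" "n \<in> {1..12}" "m \<le> 6 \<longleftrightarrow> n \<le> 6"
      "fence_vertex a b m \<in> u" "fence_vertex a b n \<in> v"
  shows "5 \<le> red_degree (quotient_trigraph G (insert (u \<union> v) (P - {u, v}))) (u \<union> v)"
proof -
  let ?x = "fence_vertex a b" and ?F = "fence_verts a b"
  define W where "W = {f \<in> {1..12} - {m, n}. fence_mixed_index m n f}"
  have W: "W \<subseteq> {1..12}"
    unfolding W_def by blast
  have inj: "inj_on ?x {1..12}"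
    using inj_on_fence_vertex[OF G(2)] .
  note in_F = fence_vertex_in_fence_verts[of _ a b]
  have "m \<noteq> n"
    using disjointD[OF partition_onD2[OF P] uv] mn(4,5) by auto
  then have "5 \<le> card W"
    unfolding W_def using card_fence_mixed_index mn(1-3) by blast
  also have "card W = card (?x ` W)"
    using card_image[OF inj_on_subset[OF inj W]] by simp
  also have "\<dots> \<le> red_degree (quotient_trigraph G (insert (u \<union> v) (P - {u, v}))) (u \<union> v)"
  proof (rule card_le_red_degree_quotient_trigraph[OF partition_on_merge[OF P uv(1,2)]])
    show "finite (tverts G)"
      using G(1) unfolding trigraph_def by blast
    have "?x f \<notin> u \<union> v" if "f \<in> W" for f
      using that fence_vertex_block_unique[OF G(2) bspec[OF once uv(1)] _ mn(1) _ mn(4)]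
        fence_vertex_block_unique[OF G(2) bspec[OF once uv(2)] _ mn(2) _ mn(5)]
      unfolding W_def by blast
    moreover have "?F \<subseteq> tverts G"
      using G(2) unfolding contains_fence_def by blast
    ultimately show outside: "?x ` W \<subseteq> tverts G - (u \<union> v)"
      using in_F W by blast
    show "\<forall>p\<in>insert (u \<union> v) (P - {u, v}). \<forall>y\<in>p \<inter> ?x ` W. \<forall>z\<in>p \<inter> ?x ` W. y = z"
    proof (intro ballI)
      fix p y z assume "p \<in> insert (u \<union> v) (P - {u, v})" "y \<in> p \<inter> ?x ` W" "z \<in> p \<inter> ?x ` W"
      then show "y = z"
        using once outside in_F W by blast
    qed
  next
    fix y assume "y \<in> ?x ` W"
    then obtain f where "f \<in> {1..12}" "y = ?x f" "fence_mixed_index m n f"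
      unfolding W_def by blast
    then show "(\<exists>s\<in>u \<union> v. {s, y} \<notin> tblack G) \<and> (\<exists>t\<in>u \<union> v. {t, y} \<in> tblack G \<union> tred G)"
      using contains_fence_mixed_index[OF G(2) mn(1,2)] mn(4,5) by blast
  qed simp
  finally show ?thesis .
qed

theorem lemma4p5:
  fixes G :: "'a trigraph" and a b :: "nat \<Rightarrow> 'a" and S :: "'a set"
    and cs :: "('a set \<times> 'a set) list" and k :: nat and u v :: "'a set"
  assumes "trigraph G"
    and "contains_fence G a b"
    and "fence_attached G a b S"
    and "partial_contraction_sequence G cs"
    and "k < length cs" and "cs ! k = (u, v)"
    and "u \<inter> fence_verts a b \<noteq> {}" and "v \<inter> fence_verts a b \<noteq> {}"
    and "\<forall>j < k. fst (cs ! j) \<inter> fence_verts a b = {} \<or> snd (cs ! j) \<inter> fence_verts a b = {}"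
    and "\<not> (\<exists>i \<in> {1..6}. \<exists>j \<in> {1..6}. (a i \<in> u \<and> b j \<in> v) \<or> (a i \<in> v \<and> b j \<in> u))"
  shows "red_degree (seq_state G cs (Suc k)) (u \<union> v) \<ge> 5"
proof -
  let ?P = "tverts (seq_state G cs k)"
  have uv: "u \<in> ?P" "v \<in> ?P" "u \<noteq> v"
    using partial_contraction_sequenceD[OF assms(4-6)] by auto
  have P: "partition_on (tverts G) ?P" and T: "seq_state G cs k = quotient_trigraph G ?P"
    using seq_state_eq_quotient_trigraph[OF assms(1,4)] assms(5) by auto
  have once: "\<forall>p\<in>?P. \<forall>x\<in>p \<inter> fence_verts a b. \<forall>y\<in>p \<inter> fence_verts a b. x = y"
    using seq_state_blocks_meet_at_most_once[OF assms(4) less_imp_le[OF assms(5)] assms(9)] .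
  obtain m n where m: "m \<in> {1..12}" "fence_vertex a b m \<in> u"
    and n: "n \<in> {1..12}" "fence_vertex a b n \<in> v"
    using assms(7,8) unfolding fence_verts_eq_image by blast
  have side: "m \<le> 6 \<longleftrightarrow> n \<le> 6"
    using assms(10) m n by (force simp: fence_vertex_def split: if_splits)
  have "seq_state G cs (Suc k) = contract (quotient_trigraph G ?P) u v"
    using seq_state_Suc[OF assms(5)] assms(6) by (simp flip: T)
  also have "\<dots> = quotient_trigraph G (insert (u \<union> v) (?P - {u, v}))"
    using contract_quotient_trigraph[OF P uv] .
  finally show ?thesis
    using red_degree_merging_fence_vertices[OF assms(1,2) P once uv m(1) n(1) side m(2) n(2)] by simp
qed

end
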